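(* Consider the downlink RIS-aided multi-cell network with directional transmissions described in the context, with unit training overhead $\beta \in \left[0, \frac{T}{M_\text{B}M_\text{R}M_\text{U}+M_\text{B}M_\text{U}}\right)$. Its coverage probability has the form $$\mathcal{P}(\beta) = K\, p_{\text{E}_\text{B}}(\sigma_\text{B}, \theta_\text{B})\, p_{\text{E}_\text{U}}(\sigma_\text{U}, \theta_\text{U}),$$ where $K>0$ does not depend on $\beta$, and $p_{\text{E}_j}$, $\sigma_j$, $\theta_j$ ($j\in\{\text{B},\text{U}\}$) are as defined in the context. Then $\mathcal{P}$ is a monotonically increasing function of the unit training overhead $\beta$.
   Context: Base stations (BSs) and user equipments (UEs) carry uniform linear arrays with $M_\text{B}\ge 1$ and $M_\text{U}\ge 1$ antennas; each reconfigurable intelligent surface (RIS) has $M_\text{R}$ reflecting elements. Beams follow a sectored model with beamwidth $\theta_j = 4/M_j$ (radians) and main-lobe gain $N_j = 2\pi/\theta_j$, $j\in\{\text{B},\text{U}\}$. A frame of length $T$ is split into a channel estimation phase of length $T_\text{E} = \beta(M_\text{B}M_\text{R}M_\text{U}+M_\text{B}M_\text{U})$ and a data phase of length $T_\text{D}=T-T_\text{E}$, where $\beta \in [0, T/(M_\text{B}M_\text{R}M_\text{U}+M_\text{B}M_\text{U}))$ is the unit training overhead (training symbols per antenna-to-antenna/element path). With average channel signal-to-noise ratio $\text{SNR}>0$, the MMSE channel estimation error variance is $\sigma_\text{E}^2 = \frac{1}{1+\beta\,\text{SNR}}$. The beam alignment error $\varepsilon_j$ of end $j$ is a zero-mean Gaussian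 truncated to $[-\pi,\pi]$ with variance parameter $\sigma_j^2 = k_j\pi^2\sigma_\text{E}^2$, where $k_j\in(0,1]$. The probability that the alignment error is at most half the beamwidth is $$p_{\text{E}_j}(\sigma_j,\theta_j) = \mathbb{P}[|\varepsilon_j|\le \theta_j/2] = \frac{\operatorname{erf}\!\left(\frac{\theta_j}{2\sqrt{2\sigma_j^2}}\right)}{\operatorname{erf}\!\left(\frac{\pi}{\sqrt{2\sigma_j^2}}\right)}.$$ The coverage probability is $\mathcal{P}=\mathbb{P}[\text{SINR}>\tau]$ for the typical user at a threshold $\tau$; the serving link has total beamforming gain $N_\text{B}N_\text{U}$ with probability $p_{\text{E}_\text{B}}p_{\text{E}_\text{U}}$ and $0$ otherwise, and all other factors of $\mathcal{P}$ (network geometry, blockage, interference, noise) are collected into the constant $K>0$ independent of $\beta$. *)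

theory Defs
  imports "HOL-Analysis.Analysis"
begin

definition erf :: "real \<Rightarrow> real" where
  "erf x = 2 / sqrt pi * (LBINT t=0..x. exp (- (t^2)))"

definition beamwidth :: "nat \<Rightarrow> real" where
  "beamwidth M = 4 / real M"

definition mainlobe_gain :: "nat \<Rightarrow> real" where
  "mainlobe_gain M = 2 * pi / beamwidth M"

definition est_err_var :: "real \<Rightarrow> real \<Rightarrow> real" where
  "est_err_var SNR \<beta> = 1 / (1 + \<beta> * SNR)"

definition align_var :: "real \<Rightarrow> real \<Rightarrow> real \<Rightarrow> real" where
  "align_var k SNR \<beta> = k * pi^2 * est_err_var SNR \<beta>"

text \<open>p_E(sigma, theta) = P[|eps| <= theta/2] for zero-mean Gaussian truncated to [-pi,pi],
  given in terms of the variance parameter sigma^2.\<close>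
definition p_E :: "real \<Rightarrow> real \<Rightarrow> real" where
  "p_E sigma2 \<theta> = erf (\<theta> / (2 * sqrt (2 * sigma2))) / erf (pi / sqrt (2 * sigma2))"

definition coverage :: "real \<Rightarrow> real \<Rightarrow> real \<Rightarrow> real \<Rightarrow> nat \<Rightarrow> nat \<Rightarrow> real \<Rightarrow> real" where
  "coverage K SNR kB kU MB MU \<beta> =
     K * p_E (align_var kB SNR \<beta>) (beamwidth MB) * p_E (align_var kU SNR \<beta>) (beamwidth MU)"

end

theory Submission
  imports Defs
begin

text \<open>Writing \<open>a = 1 / sqrt (2 \<sigma>\<^sup>2)\<close>, the alignment probability is \<open>erf (a \<theta>/2) / erf (a \<pi>)\<close>,
  and \<open>a\<close> grows with the training overhead because the estimation error variance shrinks.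
  For \<open>0 < c\<^sub>1 \<le> c\<^sub>2\<close> the ratio \<open>erf (c\<^sub>1 a) / erf (c\<^sub>2 a)\<close> increases with \<open>a\<close>: the derivative
  of \<open>ln (erf (c a))\<close> in \<open>a\<close> is \<open>2 / sqrt \<pi> * \<psi> (c a) / a\<close> with \<open>\<psi> x = x exp (-x\<^sup>2) / erf x\<close>,
  and \<open>\<psi>\<close> decreases on \<open>(0, \<infinity>)\<close> because \<open>(1 - 2 x\<^sup>2) erf x \<le> 2 / sqrt \<pi> * x exp (-x\<^sup>2)\<close>;
  the two sides of the latter agree at 0 and their difference has derivative \<open>4 x erf x \<ge> 0\<close>.
  The coverage probability is \<open>K\<close> times two nonnegative factors of this kind.\<close>

lemma erf_has_real_derivative: "(erf has_real_derivative 2 / sqrt pi * exp (- (x^2))) (at x)"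
proof -
  define r where "r = \<bar>x\<bar> + 1"
  have "((\<lambda>u. LBINT t=ereal 0..u. exp (- (t^2))) has_vector_derivative exp (- (x^2)))
          (at x within {-r..r})"
    by (rule interval_integral_FTC2) (auto simp: r_def intro!: continuous_intros)
  moreover have "at x within {-r..r} = at x"
    by (rule at_within_Icc_at) (auto simp: r_def)
  ultimately have "((\<lambda>u. LBINT t=0..u. exp (- (t^2))) has_real_derivative exp (- (x^2))) (at x)"
    by (simp add: zero_ereal_def has_real_derivative_iff_has_vector_derivative)
  then show ?thesis
    unfolding erf_def [abs_def] by (rule DERIV_cmult)
qed

lemma erf_has_real_derivative_chain [derivative_intros]:
  "(f has_real_derivative f') (at x within S) \<Longrightarrow>
   ((\<lambda>x. erf (f x)) has_real_derivative 2 / sqrt pi * exp (- ((f x)^2)) * f') (at x within S)"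
  using DERIV_chain2 [OF erf_has_real_derivative] by blast

lemma erf_0 [simp]: "erf 0 = 0"
  by (simp add: erf_def zero_ereal_def [symmetric])

lemma erf_strict_mono: "strict_mono erf"
  by (rule strict_monoI, rule DERIV_pos_imp_increasing) (auto intro: erf_has_real_derivative)

lemma erf_pos: "0 < x \<Longrightarrow> 0 < erf x"
  using strict_monoD [OF erf_strict_mono, of 0 x] by simp

lemma erf_nonneg: "0 \<le> x \<Longrightarrow> 0 \<le> erf x"
  using erf_pos [of x] by (cases "x = 0") auto

lemma one_minus_two_sq_mul_erf_le:
  assumes "0 \<le> x"
  shows "(1 - 2 * x^2) * erf x \<le> 2 / sqrt pi * x * exp (- (x^2))"
proof -
  define h where "h u = 2 / sqrt pi * u * exp (- (u^2)) - (1 - 2 * u^2) * erf u" for u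
  have "h 0 \<le> h x"
  proof (rule DERIV_nonneg_imp_nondecreasing [OF assms])
    fix t :: real
    assume "0 \<le> t"
    have "(h has_real_derivative 4 * t * erf t) (at t)"
      unfolding h_def [abs_def]
      by (rule derivative_eq_intros refl | simp)+ (simp add: field_simps power2_eq_square)
    moreover have "0 \<le> 4 * t * erf t"
      using \<open>0 \<le> t\<close> erf_nonneg by simp
    ultimately show "\<exists>y. (h has_real_derivative y) (at t) \<and> 0 \<le> y"
      by blast
  qed
  then show ?thesis
    by (simp add: h_def)
qed

lemma mul_exp_div_erf_antimono:
  assumes "0 < x" and "x \<le> y"
  shows "y * exp (- (y^2)) / erf y \<le> x * exp (- (x^2)) / erf x"
proof (rule DERIV_nonpos_imp_nonincreasing [OF assms(2)])
  fix t :: real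
  assume "x \<le> t"
  with assms have "0 < t" by simp
  then have "erf t \<noteq> 0"
    using erf_pos by force
  define d where "d = exp (- (t^2)) * ((1 - 2 * t^2) * erf t - 2 / sqrt pi * t * exp (- (t^2))) / (erf t)^2"
  have "((\<lambda>t. t * exp (- (t^2)) / erf t) has_real_derivative d) (at t)"
    unfolding d_def
    by (rule derivative_eq_intros refl)+
      (use \<open>erf t \<noteq> 0\<close> in \<open>simp_all add: divide_simps power2_eq_square algebra_simps\<close>)
  moreover have "d \<le> 0"
    unfolding d_def using one_minus_two_sq_mul_erf_le [of t] \<open>0 < t\<close>
    by (intro divide_nonpos_nonneg mult_nonneg_nonpos) auto
  ultimately show "\<exists>d. ((\<lambda>t. t * exp (- (t^2)) / erf t) has_real_derivative d) (at t) \<and> d \<le> 0"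
    by blast
qed

lemma erf_ratio_mono:
  assumes "0 < c\<^sub>1" and "c\<^sub>1 \<le> c\<^sub>2" and "0 < a" and "a \<le> b"
  shows "erf (c\<^sub>1 * a) / erf (c\<^sub>2 * a) \<le> erf (c\<^sub>1 * b) / erf (c\<^sub>2 * b)"
proof (rule DERIV_nonneg_imp_nondecreasing [OF assms(4)])
  fix t :: real
  assume "a \<le> t"
  with assms have "0 < t" "0 < c\<^sub>1 * t" "c\<^sub>1 * t \<le> c\<^sub>2 * t"
    by (simp_all add: mult_right_mono)
  then have erf_pos_t: "0 < erf (c\<^sub>1 * t)" "0 < erf (c\<^sub>2 * t)"
    by (meson erf_pos order_less_le_trans)+
  define d where "d = 2 / sqrt pi *
    (c\<^sub>1 * exp (- ((c\<^sub>1 * t)^2)) * erf (c\<^sub>2 * t) - c\<^sub>2 * exp (- ((c\<^sub>2 * t)^2)) * erf (c\<^sub>1 * t))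
    / (erf (c\<^sub>2 * t))^2"
  have "((\<lambda>t. erf (c\<^sub>1 * t) / erf (c\<^sub>2 * t)) has_real_derivative d) (at t)"
    unfolding d_def
    by (rule derivative_eq_intros refl)+
      (use erf_pos_t in \<open>simp_all add: divide_simps power2_eq_square algebra_simps\<close>)
  moreover have "c\<^sub>2 * exp (- ((c\<^sub>2 * t)^2)) * erf (c\<^sub>1 * t) \<le> c\<^sub>1 * exp (- ((c\<^sub>1 * t)^2)) * erf (c\<^sub>2 * t)"
  proof -
    have "c\<^sub>2 * t * exp (- ((c\<^sub>2 * t)^2)) / erf (c\<^sub>2 * t) \<le> c\<^sub>1 * t * exp (- ((c\<^sub>1 * t)^2)) / erf (c\<^sub>1 * t)"
      using mul_exp_div_erf_antimono \<open>0 < c\<^sub>1 * t\<close> \<open>c\<^sub>1 * t \<le> c\<^sub>2 * t\<close> by blast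
    then have "t * (c\<^sub>2 * exp (- ((c\<^sub>2 * t)^2)) * erf (c\<^sub>1 * t)) \<le> t * (c\<^sub>1 * exp (- ((c\<^sub>1 * t)^2)) * erf (c\<^sub>2 * t))"
      using erf_pos_t by (simp add: divide_simps algebra_simps)
    then show ?thesis
      using \<open>0 < t\<close> by simp
  qed
  then have "0 \<le> d"
    unfolding d_def by simp
  ultimately show "\<exists>y. ((\<lambda>t. erf (c\<^sub>1 * t) / erf (c\<^sub>2 * t)) has_real_derivative y) (at t) \<and> 0 \<le> y"
    by blast
qed

lemma p_E_eq_erf_ratio:
  "p_E s \<theta> = erf (\<theta> / 2 * (1 / sqrt (2 * s))) / erf (pi * (1 / sqrt (2 * s)))"
  by (simp add: p_E_def)

lemma p_E_nonneg: "0 \<le> \<theta> \<Longrightarrow> 0 < s \<Longrightarrow> 0 \<le> p_E s \<theta>"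
  by (simp add: p_E_eq_erf_ratio erf_nonneg)

lemma p_E_antimono:
  assumes "0 < \<theta>" and "\<theta> \<le> 2 * pi" and "0 < s" and "s \<le> s'"
  shows "p_E s' \<theta> \<le> p_E s \<theta>"
proof -
  have "1 / sqrt (2 * s') \<le> 1 / sqrt (2 * s)"
    using assms by (simp add: frac_le)
  with assms show ?thesis
    unfolding p_E_eq_erf_ratio by (intro erf_ratio_mono) auto
qed

lemma align_var_pos: "0 < k \<Longrightarrow> 0 < SNR \<Longrightarrow> 0 \<le> \<beta> \<Longrightarrow> 0 < align_var k SNR \<beta>"
  by (simp add: align_var_def est_err_var_def add_pos_nonneg)

lemma align_var_antimono:
  assumes "0 \<le> k" and "0 \<le> SNR" and "0 \<le> \<beta>" and "\<beta> \<le> \<beta>'"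
  shows "align_var k SNR \<beta>' \<le> align_var k SNR \<beta>"
  using assms unfolding align_var_def est_err_var_def
  by (intro mult_left_mono frac_le) (auto intro: add_pos_nonneg mult_right_mono)

lemma beamwidth_pos: "1 \<le> M \<Longrightarrow> 0 < beamwidth M"
  by (simp add: beamwidth_def)

lemma beamwidth_le_two_pi:
  assumes "1 \<le> M"
  shows "beamwidth M \<le> 2 * pi"
proof -
  have "beamwidth M \<le> 4"
    using assms by (simp add: beamwidth_def divide_simps)
  also have "4 \<le> 2 * pi"
    using pi_gt3 by simp
  finally show ?thesis .
qed

lemma p_E_align_var_mono:
  assumes "1 \<le> M" and "0 < SNR" and "0 < k"
  shows "mono_on {0..} (\<lambda>\<beta>. p_E (align_var k SNR \<beta>) (beamwidth M))"
  using assms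
  by (intro mono_onI p_E_antimono align_var_antimono align_var_pos beamwidth_pos beamwidth_le_two_pi)
    auto

lemma p_E_align_var_nonneg:
  "1 \<le> M \<Longrightarrow> 0 < SNR \<Longrightarrow> 0 < k \<Longrightarrow> 0 \<le> \<beta> \<Longrightarrow> 0 \<le> p_E (align_var k SNR \<beta>) (beamwidth M)"
  by (intro p_E_nonneg align_var_pos less_imp_le [OF beamwidth_pos])

lemma mono_on_mult_nonneg:
  fixes f g :: "'a::order \<Rightarrow> 'b::ordered_semiring_0"
  assumes "mono_on A f" and "mono_on A g" and "\<And>x. x \<in> A \<Longrightarrow> 0 \<le> f x"
    and "\<And>x. x \<in> A \<Longrightarrow> 0 \<le> g x"
  shows "mono_on A (\<lambda>x. f x * g x)"
  using assms by (auto intro!: mono_onI mult_mono dest: mono_onD)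

theorem corollary1:
  fixes T SNR K kB kU :: real and MB MU MR :: nat
  assumes "MB \<ge> 1" and "MU \<ge> 1" and "MR \<ge> 1"
    and "SNR > 0" and "K > 0"
    and "0 < kB" and "kB \<le> 1" and "0 < kU" and "kU \<le> 1"
  shows "mono_on {0..<T / real (MB * MR * MU + MB * MU)} (coverage K SNR kB kU MB MU)"
proof (rule mono_on_subset)
  define p where "p k M \<beta> = p_E (align_var k SNR \<beta>) (beamwidth M)" for k M \<beta>
  have mono: "mono_on {0..} (p k M)" if "1 \<le> M" "0 < k" for k M
    unfolding p_def using p_E_align_var_mono that \<open>SNR > 0\<close> by blast
  have nonneg: "0 \<le> p k M \<beta>" if "1 \<le> M" "0 < k" "\<beta> \<in> {0..}" for k M \<beta>
    unfolding p_def using p_E_align_var_nonneg that \<open>SNR > 0\<close> by simp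
  have "coverage K SNR kB kU MB MU = (\<lambda>\<beta>. (K * p kB MB \<beta>) * p kU MU \<beta>)"
    by (simp add: coverage_def p_def fun_eq_iff)
  moreover have "mono_on {0..} (\<lambda>\<beta>. (K * p kB MB \<beta>) * p kU MU \<beta>)"
  proof (rule mono_on_mult_nonneg)
    show "mono_on {0..} (\<lambda>\<beta>. K * p kB MB \<beta>)"
      by (rule mono_on_mult_nonneg [OF mono_on_const mono]) (use assms nonneg in auto)
  qed (use assms mono nonneg in auto)
  ultimately show "mono_on {0..} (coverage K SNR kB kU MB MU)"
    by simp
qed auto

end
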